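(* Let $\mu>0$ and let $\{x^n\}$ be generated by GAITA (as in the context) from any $x^0\in\mathbf{R}^N$. For every $n\in\mathbf{N}$, with $i=(n\bmod N)+1$, either (a) $x_i^{n+1}=0$, or (b) $|x_i^{n+1}|\geq\eta_{\mu,q}$ and $$A_i^T(Ax^{n+1}-y)+\lambda q\, sgn(x_i^{n+1})|x_i^{n+1}|^{q-1}=\Big(\frac1\mu-A_i^TA_i\Big)(x_i^n-x_i^{n+1}).$$
   Context: Let $A\in\mathbf{R}^{m\times N}$ have columns $A_1,\dots,A_N$, $y\in\mathbf{R}^m$, $\lambda>0$, $q\in(0,1)$. For a step size $\mu>0$ set $\tau_{\mu,q}=\frac{2-q}{2-2q}(2\lambda\mu(1-q))^{\frac{1}{2-q}}$ and $\eta_{\mu,q}=(2\lambda\mu(1-q))^{\frac{1}{2-q}}$. For $z\in\mathbf{R}$ let $prox_{\mu,\lambda|\cdot|^q}(z)=\arg\min_{v\in\mathbf{R}}\{\frac{(z-v)^2}{2\mu}+\lambda|v|^q\}$ (a single point when $|z|\neq\tau_{\mu,q}$). Define $\mathcal{T}(z,w)$ as the unique element of $prox_{\mu,\lambda|\cdot|^q}(z)$ if $|z|\neq\tau_{\mu,q}$, and, if $|z|=\tau_{\mu,q}$, as $sgn(z)\eta_{\mu,q}$ when $w\neq0$ and $0$ when $w=0$ ($sgn(0)=0$). GAITA: given $x^0\in\mathbf{R}^N$, for $n=0,1,2,\dots$ let $i=(n\bmod N)+1$, $z_i^n=x_i^n-\mu A_i^T(Ax^n-y)$, $x_i^{n+1}=\mathcal{T}(z_i^n,x_i^n)$,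 $x_j^{n+1}=x_j^n$ for $j\neq i$. *)

theory Defs
  imports "HOL-Analysis.Analysis"
begin

(* Matrices A in R^{m x N} are functions nat => nat => real, A j k = entry (row j, column k),
   with rows j < m and columns k < N.
   Columns are indexed 0..N-1 (paper's index i corresponds to i-1 here). *)

definition matvec :: "nat \<Rightarrow> nat \<Rightarrow> (nat \<Rightarrow> nat \<Rightarrow> real) \<Rightarrow> (nat \<Rightarrow> real) \<Rightarrow> (nat \<Rightarrow> real)" where
  "matvec m N A x = (\<lambda>j. \<Sum>k<N. A j k * x k)"

definition colT :: "nat \<Rightarrow> (nat \<Rightarrow> nat \<Rightarrow> real) \<Rightarrow> nat \<Rightarrow> (nat \<Rightarrow> real) \<Rightarrow> real" where
  "colT m A i v = (\<Sum>j<m. A j i * v j)"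

definition tau :: "real \<Rightarrow> real \<Rightarrow> real \<Rightarrow> real" where
  "tau lam mu q = (2 - q) / (2 - 2 * q) * (2 * lam * mu * (1 - q)) powr (1 / (2 - q))"

definition eta :: "real \<Rightarrow> real \<Rightarrow> real \<Rightarrow> real" where
  "eta lam mu q = (2 * lam * mu * (1 - q)) powr (1 / (2 - q))"

(* set of minimizers of (z-v)^2/(2 mu) + lam |v|^q ; |v|^q written with powr, 0 powr q = 0 *)
definition prox :: "real \<Rightarrow> real \<Rightarrow> real \<Rightarrow> real \<Rightarrow> real set" where
  "prox lam mu q z = {v. \<forall>u. (z - v)\<^sup>2 / (2 * mu) + lam * \<bar>v\<bar> powr q
                          \<le> (z - u)\<^sup>2 / (2 * mu) + lam * \<bar>u\<bar> powr q}"

definition Tmap :: "real \<Rightarrow> real \<Rightarrow> real \<Rightarrow> real \<Rightarrow> real \<Rightarrow> real" where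
  "Tmap lam mu q z w =
     (if \<bar>z\<bar> \<noteq> tau lam mu q then (THE v. v \<in> prox lam mu q z)
      else if w \<noteq> 0 then sgn z * eta lam mu q else 0)"

definition gaita_step :: "nat \<Rightarrow> nat \<Rightarrow> (nat \<Rightarrow> nat \<Rightarrow> real) \<Rightarrow> (nat \<Rightarrow> real) \<Rightarrow> real \<Rightarrow> real \<Rightarrow> real
     \<Rightarrow> nat \<Rightarrow> (nat \<Rightarrow> real) \<Rightarrow> (nat \<Rightarrow> real)" where
  "gaita_step m N A y lam mu q n x =
     (let i = n mod N;
          z = x i - mu * colT m A i (\<lambda>j. matvec m N A x j - y j)
      in x(i := Tmap lam mu q z (x i)))"

fun gaita :: "nat \<Rightarrow> nat \<Rightarrow> (nat \<Rightarrow> nat \<Rightarrow> real) \<Rightarrow> (nat \<Rightarrow> real) \<Rightarrow> real \<Rightarrow> real \<Rightarrow> real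
     \<Rightarrow> (nat \<Rightarrow> real) \<Rightarrow> nat \<Rightarrow> (nat \<Rightarrow> real)" where
  "gaita m N A y lam mu q x0 0 = x0"
| "gaita m N A y lam mu q x0 (Suc n) = gaita_step m N A y lam mu q n (gaita m N A y lam mu q x0 n)"

end

theory Submission
  imports Defs
begin

text \<open>
  At a nonzero minimiser v of the prox objective the objective is differentiable, so
  (v - z)/\<mu> + \<lambda> q sgn(v) |v|^(q-1) = 0; comparing with the value at 0 then forces |v| \<ge> \<eta>.
  Stationarity says z = sgn(v) \<psi>(|v|) with \<psi>(t) = t + \<mu>\<lambda>q t^(q-1), which is strictly increasing
  on [\<eta>, \<infinity>) with \<psi>(\<eta>) = \<tau>. Hence nonzero minimisers occur only for |z| \<ge> \<tau> and are unique,
  while 0 minimises only for |z| \<le> \<tau>: off |z| = \<tau> the prox is a singleton, and on |z| = \<tau>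
  the choice sgn(z) \<eta> is stationary because \<psi>(\<eta>) = \<tau>. As GAITA changes only coordinate i,
  A_i^T(A x^(n+1) - y) = A_i^T(A x^n - y) + A_i^T A_i (x_i^(n+1) - x_i^n), which turns
  stationarity at z_i^n into the claimed identity.
\<close>

lemma abs_powr_has_real_derivative:
  fixes q v :: real
  assumes "v \<noteq> 0"
  shows "((\<lambda>u. \<bar>u\<bar> powr q) has_real_derivative q * sgn v * \<bar>v\<bar> powr (q - 1)) (at v)"
proof (cases "v > 0")
  case True
  have "((\<lambda>u. u powr q) has_real_derivative q * v powr (q - 1)) (at v)"
    using True by (rule has_real_derivative_powr)
  then have "((\<lambda>u. \<bar>u\<bar> powr q) has_real_derivative q * v powr (q - 1)) (at v)"
    by (rule has_field_derivative_transform_within_open[where S="{0<..}"]) (use True in auto)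
  then show ?thesis using True by simp
next
  case False
  then have "v < 0" using assms by simp
  have "((\<lambda>u. (- u) powr q) has_real_derivative q * (- v) powr (q - 1) * -1) (at v)"
    using DERIV_fun_powr[OF DERIV_minus[OF DERIV_ident]] \<open>v < 0\<close> by simp
  then have "((\<lambda>u. \<bar>u\<bar> powr q) has_real_derivative q * (- v) powr (q - 1) * -1) (at v)"
    by (rule has_field_derivative_transform_within_open[where S="{..<0}"]) (use \<open>v < 0\<close> in auto)
  then show ?thesis using \<open>v < 0\<close> by simp
qed

lemma sgn_mult_abs_powr:
  fixes q v :: real
  assumes "v \<noteq> 0"
  shows "sgn v * v * \<bar>v\<bar> powr (q - 1) = \<bar>v\<bar> powr q"
proof -
  have "\<bar>v\<bar> powr q = \<bar>v\<bar> powr (q - 1) * \<bar>v\<bar>"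
    using powr_add[of "\<bar>v\<bar>" "q - 1" 1] assms by simp
  then show ?thesis by (simp add: abs_sgn mult.commute)
qed

lemma matvec_fun_upd:
  assumes "i < N"
  shows "matvec m N A (x(i := t)) j = matvec m N A x j + A j i * (t - x i)"
proof -
  have "(\<Sum>k<N. A j k * (x(i := t)) k) = (\<Sum>k<N. A j k * x k + (if k = i then A j i * (t - x i) else 0))"
    by (rule sum.cong) (auto simp: algebra_simps)
  then show ?thesis
    using assms by (simp add: matvec_def sum.distrib)
qed

lemma colT_residual_fun_upd:
  assumes "i < N"
  shows "colT m A i (\<lambda>j. matvec m N A (x(i := t)) j - y j)
       = colT m A i (\<lambda>j. matvec m N A x j - y j) + colT m A i (\<lambda>j. A j i) * (t - x i)"
proof -
  have "(\<Sum>j<m. A j i * (matvec m N A x j + A j i * (t - x i) - y j))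
      = (\<Sum>j<m. A j i * (matvec m N A x j - y j) + A j i * A j i * (t - x i))"
    by (rule sum.cong) (auto simp: algebra_simps)
  then show ?thesis
    unfolding colT_def matvec_fun_upd[OF assms] by (simp add: sum.distrib sum_distrib_right)
qed

locale lq_prox =
  fixes lam mu q :: real
  assumes lam_pos: "lam > 0" and mu_pos: "mu > 0" and q_pos: "0 < q" and q_less_1: "q < 1"
begin

abbreviation \<eta> where "\<eta> \<equiv> eta lam mu q"
abbreviation \<tau> where "\<tau> \<equiv> tau lam mu q"

lemma eta_pos: "\<eta> > 0"
  using lam_pos mu_pos q_less_1 by (simp add: eta_def)

lemma eta_powr_two_minus_q: "\<eta> powr (2 - q) = 2 * lam * mu * (1 - q)"
  using lam_pos mu_pos q_less_1 by (simp add: eta_def powr_powr)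

lemma eta_powr_q_minus_2: "\<eta> powr (q - 2) = 1 / (2 * lam * mu * (1 - q))"
  using powr_minus_divide[of \<eta> "2 - q"] eta_powr_two_minus_q by simp

lemma eta_powr_q_minus_1: "\<eta> powr (q - 1) = \<eta> / (2 * lam * mu * (1 - q))"
  using powr_add[of \<eta> "q - 2" 1] eta_powr_q_minus_2 eta_pos by simp

lemma eta_powr_q: "\<eta> powr q = \<eta>\<^sup>2 / (2 * lam * mu * (1 - q))"
  using powr_add[of \<eta> "q - 2" 2] eta_powr_q_minus_2 eta_pos by simp

lemma tau_eq_eta: "\<tau> = (2 - q) / (2 - 2 * q) * \<eta>"
  by (simp add: tau_def eta_def)

lemma tau_pos: "\<tau> > 0"
  using eta_pos q_less_1 by (simp add: tau_eq_eta)

definition objective :: "real \<Rightarrow> real \<Rightarrow> real" where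
  "objective z v = (z - v)\<^sup>2 / (2 * mu) + lam * \<bar>v\<bar> powr q"

lemma mem_prox_iff: "v \<in> prox lam mu q z \<longleftrightarrow> (\<forall>u. objective z v \<le> objective z u)"
  by (simp add: prox_def objective_def)

lemma objective_has_real_derivative:
  assumes "v \<noteq> 0"
  shows "(objective z has_real_derivative (v - z) / mu + lam * q * sgn v * \<bar>v\<bar> powr (q - 1)) (at v)"
proof -
  have "((\<lambda>u. (z - u)\<^sup>2 / (2 * mu)) has_real_derivative (v - z) / mu) (at v)"
    using mu_pos by (auto intro!: derivative_eq_intros simp: field_simps)
  from DERIV_add[OF this DERIV_cmult[OF abs_powr_has_real_derivative[OF assms], of lam]]
  show ?thesis by (simp add: objective_def [abs_def] mult.assoc)
qed

lemma prox_stationary: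
  assumes "v \<in> prox lam mu q z" "v \<noteq> 0"
  shows "(v - z) / mu + lam * q * sgn v * \<bar>v\<bar> powr (q - 1) = 0"
  using DERIV_local_min[OF objective_has_real_derivative[OF assms(2)], of 1] assms(1)
  by (auto simp: mem_prox_iff)

lemma prox_nonzero_abs_ge_eta:
  assumes "v \<in> prox lam mu q z" "v \<noteq> 0"
  shows "\<eta> \<le> \<bar>v\<bar>"
proof (rule ccontr)
  assume "\<not> \<eta> \<le> \<bar>v\<bar>"
  define P where "P = \<bar>v\<bar> powr q"
  have "P > 0" using assms(2) by (simp add: P_def)
  have "v * ((v - z) / mu + lam * q * sgn v * \<bar>v\<bar> powr (q - 1)) = 0"
    using prox_stationary[OF assms] by simp
  then have "z * v = v\<^sup>2 + mu * lam * q * (sgn v * v * \<bar>v\<bar> powr (q - 1))"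
    using mu_pos by (simp add: field_simps power2_eq_square)
  then have stationary: "z * v = v\<^sup>2 + mu * lam * q * P"
    by (simp add: sgn_mult_abs_powr[OF assms(2)] P_def)
  have "2 * mu * objective z v \<le> 2 * mu * objective z 0"
    using assms(1) mu_pos by (simp add: mem_prox_iff)
  then have "(z - v)\<^sup>2 + 2 * mu * lam * P \<le> z\<^sup>2"
    using mu_pos q_pos by (simp add: objective_def P_def algebra_simps)
  with stationary have "2 * lam * mu * (1 - q) * P \<le> v\<^sup>2"
    by (simp add: power2_eq_square algebra_simps)
  also have "v\<^sup>2 = \<bar>v\<bar> powr (2 - q) * P"
    using assms(2) by (simp add: P_def powr_add[symmetric])
  finally have "\<eta> powr (2 - q) \<le> \<bar>v\<bar> powr (2 - q)"
    using \<open>P > 0\<close> by (simp add: eta_powr_two_minus_q)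
  moreover have "\<bar>v\<bar> powr (2 - q) < \<eta> powr (2 - q)"
    using \<open>\<not> \<eta> \<le> \<bar>v\<bar>\<close> q_less_1 by (intro powr_less_mono2) auto
  ultimately show False by simp
qed

definition psi :: "real \<Rightarrow> real" where
  "psi t = t + mu * lam * q * t powr (q - 1)"

lemma prox_nonzero_eq_sgn_psi:
  assumes "v \<in> prox lam mu q z" "v \<noteq> 0"
  shows "z = sgn v * psi \<bar>v\<bar>"
proof -
  have "z = v + mu * lam * q * sgn v * \<bar>v\<bar> powr (q - 1)"
    using prox_stationary[OF assms] mu_pos by (simp add: field_simps)
  then show ?thesis
    by (simp add: psi_def distrib_left sgn_mult_abs mult.assoc mult.left_commute)
qed

lemma psi_pos: "t > 0 \<Longrightarrow> psi t > 0"
  using mu_pos lam_pos q_pos by (simp add: psi_def add_pos_nonneg)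

lemma psi_eta: "psi \<eta> = \<tau>"
  using lam_pos mu_pos q_less_1
  by (simp add: psi_def eta_powr_q_minus_1 tau_eq_eta field_simps)

lemma strict_mono_on_psi: "strict_mono_on {\<eta>..} psi"
proof (rule strict_mono_onI)
  fix a b assume "a \<in> {\<eta>..}" "b \<in> {\<eta>..}" "a < b"
  show "psi a < psi b"
    unfolding psi_def
  proof (rule DERIV_pos_imp_increasing[OF \<open>a < b\<close>])
    fix t assume "a \<le> t" "t \<le> b"
    then have "t > 0" "\<eta> \<le> t" using \<open>a \<in> {\<eta>..}\<close> eta_pos by auto
    have "t powr (q - 2) \<le> \<eta> powr (q - 2)"
      using \<open>\<eta> \<le> t\<close> eta_pos q_less_1 by (intro powr_mono2') auto
    then have "2 * lam * mu * (1 - q) * t powr (q - 2) \<le> 1"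
      using lam_pos mu_pos q_less_1 by (simp add: eta_powr_q_minus_2 pos_le_divide_eq mult.commute)
    from mult_left_mono[OF this, of "q / 2"]
    have "mu * lam * q * (1 - q) * t powr (q - 2) \<le> q / 2"
      using q_pos by (simp add: algebra_simps)
    then have "0 < 1 + mu * lam * q * ((q - 1) * t powr (q - 1 - 1))"
      using q_less_1 by (simp add: algebra_simps)
    with DERIV_add[OF DERIV_ident DERIV_cmult[OF has_real_derivative_powr[OF \<open>t > 0\<close>]]]
    show "\<exists>d. ((\<lambda>t. t + mu * lam * q * t powr (q - 1)) has_real_derivative d) (at t) \<and> 0 < d"
      by blast
  qed
qed

lemma prox_nonzero_tau_le_abs:
  assumes "v \<in> prox lam mu q z" "v \<noteq> 0"
  shows "\<tau> \<le> \<bar>z\<bar>"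
proof -
  have "\<tau> = psi \<eta>" by (simp add: psi_eta)
  also have "\<dots> \<le> psi \<bar>v\<bar>"
    using prox_nonzero_abs_ge_eta[OF assms] eta_pos
    by (intro strict_mono_on_leD[OF strict_mono_on_psi]) auto
  also have "\<dots> = \<bar>z\<bar>"
    using prox_nonzero_eq_sgn_psi[OF assms] psi_pos[of "\<bar>v\<bar>"] assms(2)
    by (simp add: abs_mult)
  finally show ?thesis .
qed

lemma zero_in_prox_abs_le_tau:
  assumes "0 \<in> prox lam mu q z"
  shows "\<bar>z\<bar> \<le> \<tau>"
proof (rule ccontr)
  assume "\<not> \<bar>z\<bar> \<le> \<tau>"
  then have "z \<noteq> 0" using tau_pos by auto
  have "(z - sgn z * \<eta>)\<^sup>2 = z\<^sup>2 - 2 * \<bar>z\<bar> * \<eta> + \<eta>\<^sup>2"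
    using \<open>z \<noteq> 0\<close> by (simp add: power2_eq_square algebra_simps sgn_mult_abs abs_sgn)
  then have "objective z (sgn z * \<eta>) - objective z 0 = \<eta> * (\<tau> - \<bar>z\<bar>) / mu"
    using \<open>z \<noteq> 0\<close> eta_pos lam_pos mu_pos q_pos q_less_1
    by (simp add: objective_def abs_mult eta_powr_q tau_eq_eta field_simps power2_eq_square)
  also have "\<dots> < 0"
    using \<open>\<not> \<bar>z\<bar> \<le> \<tau>\<close> eta_pos mu_pos by (simp add: divide_neg_pos mult_pos_neg)
  finally show False
    using assms by (auto simp: mem_prox_iff dest: spec[of _ "sgn z * \<eta>"])
qed

lemma prox_nonempty: "\<exists>v. v \<in> prox lam mu q z"
proof -
  have "continuous_on (cball 0 (2 * \<bar>z\<bar>)) (objective z)"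
    unfolding objective_def [abs_def]
    by (intro continuous_intros continuous_on_powr') (use q_pos mu_pos in auto)
  then obtain v where v: "\<forall>u \<in> cball 0 (2 * \<bar>z\<bar>). objective z v \<le> objective z u"
    using continuous_attains_inf[OF compact_cball _ \<open>continuous_on _ _\<close>] by auto
  have "objective z v \<le> objective z u" for u
  proof (cases "u \<in> cball 0 (2 * \<bar>z\<bar>)")
    case False
    then have "\<bar>z\<bar> \<le> \<bar>z - u\<bar>"
      by (simp add: dist_real_def)
    then have "\<bar>z\<bar>\<^sup>2 \<le> \<bar>z - u\<bar>\<^sup>2"
      by (intro power_mono) auto
    then have "objective z 0 \<le> objective z u"
      using mu_pos lam_pos q_pos by (simp add: objective_def divide_right_mono add_increasing2)
    moreover have "objective z v \<le> objective z 0"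
      using v by simp
    ultimately show ?thesis by simp
  qed (use v in auto)
  then show ?thesis by (auto simp: mem_prox_iff)
qed

lemma prox_nonzero_unique:
  assumes "v\<^sub>1 \<in> prox lam mu q z" "v\<^sub>1 \<noteq> 0" "v\<^sub>2 \<in> prox lam mu q z" "v\<^sub>2 \<noteq> 0"
  shows "v\<^sub>1 = v\<^sub>2"
proof -
  have sgn_abs: "sgn z = sgn v \<and> \<bar>z\<bar> = psi \<bar>v\<bar>" if "v \<in> prox lam mu q z" "v \<noteq> 0" for v
    using prox_nonzero_eq_sgn_psi[OF that] psi_pos[of "\<bar>v\<bar>"] that(2) by (simp add: sgn_mult abs_mult)
  have "sgn z = sgn v\<^sub>1" "sgn z = sgn v\<^sub>2" "\<bar>z\<bar> = psi \<bar>v\<^sub>1\<bar>" "\<bar>z\<bar> = psi \<bar>v\<^sub>2\<bar>"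
    using sgn_abs[OF assms(1,2)] sgn_abs[OF assms(3,4)] by blast+
  moreover have "\<bar>v\<^sub>1\<bar> = \<bar>v\<^sub>2\<bar>"
  proof (rule inj_onD[OF strict_mono_on_imp_inj_on[OF strict_mono_on_psi]])
    show "psi \<bar>v\<^sub>1\<bar> = psi \<bar>v\<^sub>2\<bar>"
      using \<open>\<bar>z\<bar> = psi \<bar>v\<^sub>1\<bar>\<close> \<open>\<bar>z\<bar> = psi \<bar>v\<^sub>2\<bar>\<close> by simp
    show "\<bar>v\<^sub>1\<bar> \<in> {\<eta>..}" "\<bar>v\<^sub>2\<bar> \<in> {\<eta>..}"
      using prox_nonzero_abs_ge_eta assms by auto
  qed
  ultimately show ?thesis by (metis sgn_mult_abs)
qed

lemma prox_unique:
  assumes "\<bar>z\<bar> \<noteq> \<tau>" "v\<^sub>1 \<in> prox lam mu q z" "v\<^sub>2 \<in> prox lam mu q z"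
  shows "v\<^sub>1 = v\<^sub>2"
proof -
  have "v \<noteq> 0" if "v \<in> prox lam mu q z" "v' \<in> prox lam mu q z" "v' \<noteq> 0" for v v'
    using that assms(1) prox_nonzero_tau_le_abs zero_in_prox_abs_le_tau by force
  then show ?thesis
    using assms(2,3) prox_nonzero_unique by blast
qed

lemma Tmap_zero_or_stationary:
  fixes z w :: real
  defines "t \<equiv> Tmap lam mu q z w"
  shows "t = 0 \<or> (\<eta> \<le> \<bar>t\<bar> \<and> (t - z) / mu + lam * q * sgn t * \<bar>t\<bar> powr (q - 1) = 0)"
proof (cases "\<bar>z\<bar> = \<tau>")
  case False
  obtain v where v: "v \<in> prox lam mu q z"
    using prox_nonempty by blast
  then have "t = v"
    using prox_unique[OF False] False by (auto simp: t_def Tmap_def intro: the_equality)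
  then show ?thesis
    using v prox_nonzero_abs_ge_eta prox_stationary by blast
next
  case True
  show ?thesis
  proof (cases "w = 0")
    case False
    have "z \<noteq> 0" using True tau_pos by auto
    have t: "t = sgn z * \<eta>"
      using True False by (simp add: t_def Tmap_def)
    have "z = sgn z * psi \<eta>"
      by (metis True psi_eta sgn_mult_abs)
    then have "(t - z) / mu + lam * q * sgn t * \<bar>t\<bar> powr (q - 1) = 0"
      using \<open>z \<noteq> 0\<close> eta_pos mu_pos
      by (simp add: t psi_def abs_mult sgn_mult field_simps)
    then show ?thesis
      using \<open>z \<noteq> 0\<close> eta_pos by (simp add: t abs_mult)
  qed (simp add: t_def Tmap_def True)
qed

end

theorem mainTheorem7:
  fixes m N :: nat and A :: "nat \<Rightarrow> nat \<Rightarrow> real" and y x0 :: "nat \<Rightarrow> real"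
    and lam mu q :: real and n :: nat
  assumes "N > 0" and "lam > 0" and "0 < q" and "q < 1" and "mu > 0"
  defines "x \<equiv> gaita m N A y lam mu q x0"
  defines "i \<equiv> n mod N"
  shows "x (Suc n) i = 0 \<or>
    (\<bar>x (Suc n) i\<bar> \<ge> eta lam mu q \<and>
     colT m A i (\<lambda>j. matvec m N A (x (Suc n)) j - y j)
       + lam * q * sgn (x (Suc n) i) * \<bar>x (Suc n) i\<bar> powr (q - 1)
     = (1 / mu - colT m A i (\<lambda>j. A j i)) * (x n i - x (Suc n) i))"
proof -
  interpret lq_prox lam mu q
    using assms by unfold_locales
  define r where "r = colT m A i (\<lambda>j. matvec m N A (x n) j - y j)"
  define z where "z = x n i - mu * r"
  define t where "t = Tmap lam mu q z (x n i)"
  have step: "x (Suc n) = (x n)(i := t)"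
    by (simp add: x_def i_def t_def z_def r_def gaita_step_def Let_def)
  have residual: "colT m A i (\<lambda>j. matvec m N A (x (Suc n)) j - y j)
      = r + colT m A i (\<lambda>j. A j i) * (t - x n i)"
    unfolding step r_def using \<open>N > 0\<close> by (simp add: i_def colT_residual_fun_upd)
  have "(t - z) / mu = t / mu - x n i / mu + r"
    using \<open>mu > 0\<close> by (simp add: z_def field_simps)
  moreover have "x (Suc n) i = t"
    by (simp add: step)
  ultimately show ?thesis
    using Tmap_zero_or_stationary[of z "x n i", folded t_def]
    by (auto simp: residual algebra_simps diff_divide_distrib)
qed

end
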